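(* Let $x_1\ge\cdots\ge x_n$ and $y_1\ge\cdots\ge y_n$ be reals such that $\{x_i\}$ majorizes $\{y_i\}$. Suppose that in the negative-fill variable-processor cup game there is a filler move on the state $\{y_i\}$ such that after greedy emptying the state becomes $\{y_i'\}$. Then there is a filler move on the state $\{x_i\}$ (possibly with a different number of processors $p$) such that after greedy emptying the state becomes some $\{x_i'\}$ which majorizes $\{y_i'\}$.
   Context: For sequences $x_1\ge\cdots\ge x_n$ and $y_1\ge\cdots\ge y_n$ with $\sum_i x_i=\sum_i y_i$, $\{x_i\}$ majorizes $\{y_i\}$ if $\sum_{i=1}^m x_i\ge\sum_{i=1}^m y_i$ for every $m\le n$; for unsorted sequences this is applied after sorting. Negative-fill variable-processor cup game: a filler move chooses an integer $1\le p\le n$ and reals $a_i\in[0,1]$ with $\sum a_i=p$ and adds $a_i$ to cup $i$; greedy emptying then subtracts exactly $1$ from each of the $p$ cups with largest fill (fills may become negative). *)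

theory Defs
  imports Complex_Main
begin

text \<open>States of n cups are real lists of length n; cup i has fill xs!i.\<close>

definition majorizes :: "real list \<Rightarrow> real list \<Rightarrow> bool" where
  "majorizes xs ys \<longleftrightarrow>
     length xs = length ys \<and> sum_list xs = sum_list ys \<and>
     (\<forall>m \<le> length xs. sum_list (take m (rev (sort ys))) \<le> sum_list (take m (rev (sort xs))))"

definition filler_move :: "nat \<Rightarrow> nat \<Rightarrow> real list \<Rightarrow> bool" where
  "filler_move n p a \<longleftrightarrow>
     1 \<le> p \<and> p \<le> n \<and> length a = n \<and> (\<forall>i<n. 0 \<le> a!i \<and> a!i \<le> 1) \<and> sum_list a = real p"

text \<open>Greedy emptying with p processors: subtract exactly 1 from each of p cups with
  largest fill (any tie-breaking; fills may become negative).\<close>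
definition greedy_empty :: "nat \<Rightarrow> real list \<Rightarrow> real list \<Rightarrow> bool" where
  "greedy_empty p z z' \<longleftrightarrow>
     (\<exists>S. S \<subseteq> {..<length z} \<and> card S = p \<and>
        (\<forall>i\<in>S. \<forall>j\<in>{..<length z} - S. z!j \<le> z!i) \<and>
        z' = map (\<lambda>i. z!i - (if i \<in> S then 1 else 0)) [0..<length z])"

definition cup_step :: "real list \<Rightarrow> real list \<Rightarrow> bool" where
  "cup_step x x' \<longleftrightarrow>
     (\<exists>p a. filler_move (length x) p a \<and> greedy_empty p (map2 (+) x a) x')"

end

(*
  Greedy emptying has a threshold c (the smallest emptied fill): the emptied cups have fill at
  least c after the filler move and the others at most c, so every cup of the new state y'
  ends between min y_i (c - 1) and max y_i c. For such a clamped state, the m largest cups sum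
  to at most the sum of the m largest values max y_i c, and to at most the total minus the
  least possible contents min y_j (c - 1) of the other cups. For descending y both bounds can
  only grow when y is replaced by a state x majorizing it. Their minimum, computed for x, is
  the sequence of prefix sums of a state x' that a single move with the same threshold c
  reaches from x, and therefore x' majorizes y'.
*)

theory Submission
  imports Defs "HOL-Combinatorics.Permutations"
begin

section \<open>Sums of the largest entries\<close>

lemma sum_subset_le_sum_prefix:
  fixes u :: "nat \<Rightarrow> 'a::ordered_comm_monoid_add"
  assumes antimono: "\<And>i j. i \<le> j \<Longrightarrow> j < n \<Longrightarrow> u j \<le> u i"
    and J: "J \<subseteq> {..<n}" and card_J: "card J = m"
  shows "sum u J \<le> sum u {..<m}"
proof (cases "m = 0")
  case True
  then show ?thesis
    using J card_J by (simp add: finite_subset)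
next
  case False
  have "finite J"
    using J finite_subset by blast
  have "m \<le> n"
    using card_mono[OF _ J] card_J by simp
  define A where "A = J - {..<m}"
  define B where "B = {..<m} - J"
  have "card A = card B"
    using card_J \<open>finite J\<close> unfolding A_def B_def
    by (simp add: card_Diff_subset_Int Int_commute)
  moreover have "finite A" "finite B"
    using \<open>finite J\<close> by (auto simp: A_def B_def)
  ultimately obtain h where h: "bij_betw h A B"
    using finite_same_card_bij by blast
  have "sum u A \<le> (\<Sum>_\<in>A. u (m - 1))"
    using antimono J by (intro sum_mono) (auto simp: A_def)
  also have "\<dots> = (\<Sum>_\<in>B. u (m - 1))"
    using sum.reindex_bij_betw[OF h, of "\<lambda>_. u (m - 1)"] by simp
  also have "\<dots> \<le> sum u B"
    using antimono \<open>m \<le> n\<close> False by (intro sum_mono) (auto simp: B_def)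
  finally have "sum u A \<le> sum u B" .
  moreover have "sum u J = sum u (J \<inter> {..<m}) + sum u A"
    using \<open>finite J\<close> unfolding A_def by (rule sum.Int_Diff)
  moreover have "sum u {..<m} = sum u (J \<inter> {..<m}) + sum u B"
    unfolding B_def by (simp add: sum.Int_Diff[of "{..<m}" _ J] Int_commute)
  ultimately show ?thesis
    by (simp add: add_left_mono)
qed

lemma rev_sort_eq_self:
  fixes x :: "'a::linorder list"
  assumes "sorted_wrt (\<ge>) x"
  shows "rev (sort x) = x"
proof -
  have "sorted (rev x)"
    using assms by (simp add: sorted_wrt_rev)
  then have "sort x = rev x"
    by (metis properties_for_sort mset_rev)
  then show ?thesis
    by simp
qed

lemma sum_list_take_eq_sum_nth:
  "m \<le> length xs \<Longrightarrow> sum_list (take m xs) = (\<Sum>j<m. xs ! j)"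
  by (simp add: sum_list_sum_nth atLeast0LessThan min_def)

lemma sorted_wrt_ge_nth_mono:
  fixes x :: "'a::linorder list"
  assumes "sorted_wrt (\<ge>) x" "i \<le> j" "j < length x"
  shows "x ! j \<le> x ! i"
  using assms sorted_wrt_nth_less by (metis le_eq_less_or_eq order_refl)

lemma obtain_permutation_rev_sort:
  fixes v :: "'a::linorder list"
  obtains p where "p permutes {..<length v}" "\<And>i. i < length v \<Longrightarrow> v ! i = rev (sort v) ! p i"
proof -
  have "mset v = mset (rev (sort v))"
    by simp
  then obtain p where p: "p permutes {..<length (rev (sort v))}" "permute_list p (rev (sort v)) = v"
    using mset_eq_permutation by blast
  then show ?thesis
    using permute_list_nth that by (metis length_rev length_sort)
qed

lemma sum_subset_le_top_sum:
  fixes v :: "'a::linordered_ab_group_add list"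
  assumes S: "S \<subseteq> {..<length v}" and card_S: "card S = m"
  shows "(\<Sum>i\<in>S. v ! i) \<le> sum_list (take m (rev (sort v)))"
proof -
  let ?u = "rev (sort v)"
  obtain p where p: "p permutes {..<length v}" and v_p: "\<And>i. i < length v \<Longrightarrow> v ! i = ?u ! p i"
    using obtain_permutation_rev_sort[of v] by blast
  have inj: "inj_on p S"
    using p permutes_inj inj_on_subset by blast
  have "(\<Sum>i\<in>S. v ! i) = (\<Sum>i\<in>S. ?u ! p i)"
    using v_p S by (intro sum.cong) auto
  also have "\<dots> = (\<Sum>j\<in>p ` S. ?u ! j)"
    by (simp add: sum.reindex[OF inj])
  also have "\<dots> \<le> (\<Sum>j<m. ?u ! j)"
  proof (rule sum_subset_le_sum_prefix[where n = "length v"])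
    show "\<And>i j. i \<le> j \<Longrightarrow> j < length v \<Longrightarrow> ?u ! j \<le> ?u ! i"
      by (simp add: sorted_wrt_ge_nth_mono sorted_wrt_rev)
    show "p ` S \<subseteq> {..<length v}"
      using S p permutes_image by (metis image_mono)
    show "card (p ` S) = m"
      using card_image[OF inj] card_S by simp
  qed
  also have "\<dots> = sum_list (take m ?u)"
    using card_mono[OF _ S] card_S by (simp add: sum_list_take_eq_sum_nth)
  finally show ?thesis .
qed

lemma top_sum_attained:
  fixes v :: "'a::linordered_ab_group_add list"
  assumes m: "m \<le> length v"
  obtains S where "S \<subseteq> {..<length v}" "card S = m"
    "sum_list (take m (rev (sort v))) = (\<Sum>i\<in>S. v ! i)"
proof -
  let ?u = "rev (sort v)"
  obtain p where p: "p permutes {..<length v}" and v_p: "\<And>i. i < length v \<Longrightarrow> v ! i = ?u ! p i"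
    using obtain_permutation_rev_sort[of v] by blast
  define S where "S = inv p ` {..<m}"
  have p_inv: "inv p permutes {..<length v}"
    using permutes_inv[OF p] .
  have inj: "inj_on (inv p) {..<m}"
    using p_inv permutes_inj inj_on_subset by blast
  have S_sub: "S \<subseteq> {..<length v}"
    unfolding S_def using p_inv m permutes_image by (metis image_mono lessThan_subset_iff)
  have "(\<Sum>i\<in>S. v ! i) = (\<Sum>i\<in>S. ?u ! p i)"
    using v_p S_sub by (intro sum.cong) auto
  also have "\<dots> = (\<Sum>j<m. ?u ! j)"
    unfolding S_def by (simp add: sum.reindex[OF inj] permutes_inverses(1)[OF p])
  also have "\<dots> = sum_list (take m ?u)"
    using m by (simp add: sum_list_take_eq_sum_nth)
  finally show ?thesis
    using that S_sub card_image[OF inj] unfolding S_def by simp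
qed

lemma majorizesI:
  fixes x y :: "real list"
  assumes "length x = length y" and "sum_list x = sum_list y"
    and "\<And>S. S \<subseteq> {..<length y} \<Longrightarrow> (\<Sum>i\<in>S. y ! i) \<le> (\<Sum>i<card S. x ! i)"
  shows "majorizes x y"
  unfolding majorizes_def
proof (intro conjI allI impI)
  fix m assume m: "m \<le> length x"
  obtain S where S: "S \<subseteq> {..<length y}" "card S = m"
    and top_y: "sum_list (take m (rev (sort y))) = (\<Sum>i\<in>S. y ! i)"
    using top_sum_attained[of m y] m assms(1) by auto
  have "(\<Sum>i\<in>S. y ! i) \<le> (\<Sum>i\<in>{..<m}. x ! i)"
    using assms(3)[OF S(1)] S(2) by simp
  also have "\<dots> \<le> sum_list (take m (rev (sort x)))"
    using m by (intro sum_subset_le_top_sum) auto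
  finally show "sum_list (take m (rev (sort y))) \<le> sum_list (take m (rev (sort x)))"
    using top_y by simp
qed (use assms in auto)

lemma majorizes_sorted_prefix_sums:
  fixes x y :: "real list"
  assumes "sorted_wrt (\<ge>) x" "sorted_wrt (\<ge>) y" "majorizes x y" "m \<le> length y"
  shows "(\<Sum>j<m. y ! j) \<le> (\<Sum>j<m. x ! j)"
proof -
  have "length x = length y" "sum_list (take m y) \<le> sum_list (take m x)"
    using assms unfolding majorizes_def by (auto simp: rev_sort_eq_self)
  then show ?thesis
    using assms(4) by (simp add: sum_list_take_eq_sum_nth)
qed

section \<open>Cup steps\<close>

lemma sum_minus_indicator:
  fixes f :: "nat \<Rightarrow> real"
  assumes "S \<subseteq> {..<n}"
  shows "(\<Sum>i<n. f i - (if i \<in> S then 1 else 0)) = (\<Sum>i<n. f i) - real (card S)"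
proof -
  have "(\<Sum>i<n. if i \<in> S then (1::real) else 0) = real (card S)"
    using assms by (simp add: sum.If_cases Int_absorb1)
  then show ?thesis
    by (simp add: sum_subtractf)
qed

lemma cup_stepE:
  assumes "cup_step x x'"
  obtains p a S where "filler_move (length x) p a" "S \<subseteq> {..<length x}" "card S = p"
    "\<forall>i\<in>S. \<forall>j\<in>{..<length x} - S. x ! j + a ! j \<le> x ! i + a ! i"
    "x' = map (\<lambda>i. x ! i + a ! i - (if i \<in> S then 1 else 0)) [0..<length x]"
proof -
  obtain p a where move: "filler_move (length x) p a" and greedy: "greedy_empty p (map2 (+) x a) x'"
    using assms unfolding cup_step_def by blast
  have len: "length (map2 (+) x a) = length x"
    using move by (simp add: filler_move_def)
  have nth: "map2 (+) x a ! i = x ! i + a ! i" if "i < length x" for i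
    using move that by (simp add: filler_move_def)
  obtain S where S: "S \<subseteq> {..<length x}" "card S = p"
    "\<forall>i\<in>S. \<forall>j\<in>{..<length x} - S. map2 (+) x a ! j \<le> map2 (+) x a ! i"
    "x' = map (\<lambda>i. map2 (+) x a ! i - (if i \<in> S then 1 else 0)) [0..<length x]"
    using greedy unfolding greedy_empty_def len by blast
  show ?thesis
  proof (rule that[OF move S(1,2)])
    show "\<forall>i\<in>S. \<forall>j\<in>{..<length x} - S. x ! j + a ! j \<le> x ! i + a ! i"
    proof (intro ballI)
      fix i j assume i: "i \<in> S" and j: "j \<in> {..<length x} - S"
      then have "map2 (+) x a ! j \<le> map2 (+) x a ! i"
        using S(3) by blast
      moreover have "i < length x" "j < length x"
        using S(1) i j by auto
      ultimately show "x ! j + a ! j \<le> x ! i + a ! i"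
        using nth by simp
    qed
    show "x' = map (\<lambda>i. x ! i + a ! i - (if i \<in> S then 1 else 0)) [0..<length x]"
      using S(4) nth by simp
  qed
qed

lemma cup_step_length_sum:
  assumes "cup_step x x'"
  shows "length x' = length x" "0 < length x" "sum_list x' = sum_list x"
proof -
  let ?n = "length x"
  obtain p a S where move: "filler_move ?n p a" and S: "S \<subseteq> {..<?n}" "card S = p"
    and x': "x' = map (\<lambda>i. x ! i + a ! i - (if i \<in> S then 1 else 0)) [0..<?n]"
    by (rule cup_stepE[OF assms])
  have a: "length a = ?n" "sum_list a = real p" "1 \<le> p" "p \<le> ?n"
    using move by (auto simp: filler_move_def)
  show "length x' = ?n"
    using x' by simp
  show "0 < ?n"
    using a(3,4) by linarith
  have "sum_list x' = (\<Sum>i<?n. x ! i + a ! i) - real p"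
    using x' S by (simp add: sum_list_sum_nth atLeast0LessThan sum_minus_indicator)
  also have "\<dots> = sum_list x"
    using a by (simp add: sum.distrib sum_list_sum_nth atLeast0LessThan)
  finally show "sum_list x' = sum_list x" .
qed

lemma cup_step_clamped:
  assumes "cup_step y y'"
  obtains c where "\<And>i. i < length y \<Longrightarrow> min (y ! i) (c - 1) \<le> y' ! i \<and> y' ! i \<le> max (y ! i) c"
proof -
  let ?n = "length y"
  obtain p a S where move: "filler_move ?n p a" and S: "S \<subseteq> {..<?n}" "card S = p"
    and greedy: "\<forall>i\<in>S. \<forall>j\<in>{..<?n} - S. y ! j + a ! j \<le> y ! i + a ! i"
    and y': "y' = map (\<lambda>i. y ! i + a ! i - (if i \<in> S then 1 else 0)) [0..<?n]"
    by (rule cup_stepE[OF assms])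
  have a: "\<And>i. i < ?n \<Longrightarrow> 0 \<le> a ! i \<and> a ! i \<le> 1" "1 \<le> p"
    using move by (auto simp: filler_move_def)
  have "finite S" "S \<noteq> {}"
    using S a(2) finite_subset by auto
  define c where "c = Min ((\<lambda>i. y ! i + a ! i) ` S)"
  have c_le: "c \<le> y ! i + a ! i" if "i \<in> S" for i
    using that \<open>finite S\<close> by (simp add: c_def)
  have "c \<in> (\<lambda>i. y ! i + a ! i) ` S"
    unfolding c_def using \<open>finite S\<close> \<open>S \<noteq> {}\<close> by (intro Min_in) auto
  then obtain k where "k \<in> S" "c = y ! k + a ! k"
    by blast
  then have le_c: "y ! j + a ! j \<le> c" if "j < ?n" "j \<notin> S" for j
    using greedy that by auto
  show ?thesis
  proof (rule that)
    fix i assume i: "i < ?n"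
    show "min (y ! i) (c - 1) \<le> y' ! i \<and> y' ! i \<le> max (y ! i) c"
      using y' i a(1)[OF i] c_le[of i] le_c[OF i] by (cases "i \<in> S") auto
  qed
qed

lemma cup_step_of_emptied_set:
  assumes len: "length v = length x" and sum: "sum_list v = sum_list x"
    and P: "P \<subseteq> {..<length x}" "P \<noteq> {}"
    and emptied: "\<And>i. i \<in> P \<Longrightarrow> x ! i - 1 \<le> v ! i \<and> v ! i \<le> x ! i"
    and kept: "\<And>i. i < length x \<Longrightarrow> i \<notin> P \<Longrightarrow> x ! i \<le> v ! i \<and> v ! i \<le> x ! i + 1"
    and greedy: "\<And>i j. i \<in> P \<Longrightarrow> j < length x \<Longrightarrow> j \<notin> P \<Longrightarrow> v ! j \<le> v ! i + 1"
  shows "cup_step x v"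
proof -
  let ?n = "length x"
  define a where "a = map (\<lambda>i. v ! i - x ! i + (if i \<in> P then 1 else 0)) [0..<?n]"
  have a_nth: "a ! i = v ! i - x ! i + (if i \<in> P then 1 else 0)" if "i < ?n" for i
    using that by (simp add: a_def)
  have "sum_list a = (\<Sum>i<?n. v ! i - x ! i) + real (card P)"
    using P(1) by (simp add: a_def sum_list_sum_nth atLeast0LessThan sum.distrib sum.If_cases Int_absorb1)
  also have "(\<Sum>i<?n. v ! i - x ! i) = 0"
    using sum len by (simp add: sum_subtractf sum_list_sum_nth atLeast0LessThan)
  finally have "filler_move ?n (card P) a"
    using P emptied kept a_nth card_mono[OF _ P(1)] finite_subset[OF P(1)]
    by (force simp: filler_move_def a_def Suc_le_eq card_gt_0_iff)
  moreover have "greedy_empty (card P) (map2 (+) x a) v"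
    unfolding greedy_empty_def
  proof (intro exI[of _ P] conjI ballI)
    show "P \<subseteq> {..<length (map2 (+) x a)}"
      using P(1) by (simp add: a_def)
    show "v = map (\<lambda>i. map2 (+) x a ! i - (if i \<in> P then 1 else 0)) [0..<length (map2 (+) x a)]"
      using len by (intro nth_equalityI) (auto simp: a_def)
  next
    fix i j assume "i \<in> P" "j \<in> {..<length (map2 (+) x a)} - P"
    then show "map2 (+) x a ! j \<le> map2 (+) x a ! i"
      using P(1) greedy[of i j] by (auto simp: a_def)
  qed simp
  ultimately show ?thesis
    unfolding cup_step_def by blast
qed

lemma cup_step_refl:
  assumes "0 < length x"
  shows "cup_step x x"
proof -
  have "filler_move (length x) (length x) (replicate (length x) 1)"
    using assms by (simp add: filler_move_def sum_list_replicate Suc_le_eq)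
  moreover have "greedy_empty (length x) (map2 (+) x (replicate (length x) 1)) x"
    unfolding greedy_empty_def by (intro exI[of _ "{..<length x}"]) (auto intro!: nth_equalityI)
  ultimately show ?thesis
    unfolding cup_step_def by blast
qed

lemma cup_step_of_threshold:
  assumes len: "length v = length x" "0 < length x" and sum: "sum_list v = sum_list x"
    and moved: "\<And>i. i < length x \<Longrightarrow>
      v ! i = x ! i \<or> (c - 1 \<le> x ! i \<and> x ! i \<le> c \<and> c - 1 \<le> v ! i \<and> v ! i \<le> c)"
  shows "cup_step x v"
proof (cases "\<exists>i<length x. c - 1 \<le> v ! i \<and> v ! i \<le> x ! i")
  case True
  define P where "P = {i. i < length x \<and> c - 1 \<le> v ! i \<and> v ! i \<le> x ! i}"
  show ?thesis
  proof (rule cup_step_of_emptied_set[OF len(1) sum, of P])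
    show "P \<subseteq> {..<length x}" "P \<noteq> {}"
      using True by (auto simp: P_def)
    show "x ! i - 1 \<le> v ! i \<and> v ! i \<le> x ! i" if "i \<in> P" for i
      using moved[of i] that by (auto simp: P_def)
    show "x ! i \<le> v ! i \<and> v ! i \<le> x ! i + 1" if "i < length x" "i \<notin> P" for i
      using moved[OF that(1)] that by (auto simp: P_def)
    show "v ! j \<le> v ! i + 1" if "i \<in> P" "j < length x" "j \<notin> P" for i j
      using moved[OF that(2)] that by (auto simp: P_def)
  qed
next
  case False
  \<comment> \<open>No cup lost fill, so the equal sums force \<open>v = x\<close>.\<close>
  then have "\<forall>i\<in>{..<length x}. v ! i - x ! i = 0"
    using moved sum len(1)
    by (subst sum_nonneg_eq_0_iff[symmetric]) (force simp: sum_subtractf sum_list_sum_nth atLeast0LessThan)+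
  then have "v = x"
    using len(1) by (intro nth_equalityI) auto
  then show ?thesis
    using cup_step_refl[OF len(2)] by simp
qed

section \<open>Threshold bounds\<close>

lemma sum_lessThan_split:
  fixes f :: "nat \<Rightarrow> 'a::comm_monoid_add"
  assumes "k \<le> m"
  shows "(\<Sum>j<m. f j) = (\<Sum>j<k. f j) + (\<Sum>j\<in>{k..<m}. f j)"
  using assms by (simp add: lessThan_atLeast0 sum.atLeastLessThan_concat)

lemma downward_closed_initial_segment:
  fixes n :: nat
  assumes closed: "\<And>i j. i \<le> j \<Longrightarrow> j < n \<Longrightarrow> P j \<Longrightarrow> P i"
  obtains k where "k \<le> n" "\<And>j. j < k \<Longrightarrow> P j" "\<And>j. k \<le> j \<Longrightarrow> j < n \<Longrightarrow> \<not> P j"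
proof (cases "\<forall>j<n. P j")
  case True
  show ?thesis
    by (rule that[of n]) (use True in auto)
next
  case False
  define k where "k = (LEAST j. j < n \<and> \<not> P j)"
  have k: "k < n" "\<not> P k"
    using False LeastI_ex[of "\<lambda>j. j < n \<and> \<not> P j"] unfolding k_def by auto
  have "P j" if "j < k" for j
    using not_less_Least[of j "\<lambda>j. j < n \<and> \<not> P j"] that k unfolding k_def by auto
  moreover have "\<not> P j" if "k \<le> j" "j < n" for j
    using closed[OF that] k by blast
  ultimately show ?thesis
    using that[of k] k(1) by simp
qed

text \<open>If every cup of \<open>y'\<close> satisfies \<open>min (y ! i) (c - 1) \<le> y' ! i \<le> max (y ! i) c\<close>, then any
  \<open>m\<close> of its cups sum to at most \<open>raised_sum y c m\<close>, and also, being the total minus the other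
  cups, each of which holds at least \<open>min (y ! j) (c - 1)\<close>, to at most \<open>lowered_sum y c m\<close>.\<close>

definition raised_sum :: "real list \<Rightarrow> real \<Rightarrow> nat \<Rightarrow> real" where
  "raised_sum x c m = (\<Sum>j<m. max (x ! j) c)"

definition lowered_sum :: "real list \<Rightarrow> real \<Rightarrow> nat \<Rightarrow> real" where
  "lowered_sum x c m = (\<Sum>j<m. min (x ! j) (c - 1)) + (\<Sum>j<length x. max (x ! j - (c - 1)) 0)"

definition threshold_bound :: "real list \<Rightarrow> real \<Rightarrow> nat \<Rightarrow> real" where
  "threshold_bound x c m = min (raised_sum x c m) (lowered_sum x c m)"

definition threshold_move :: "real list \<Rightarrow> real \<Rightarrow> real list" where
  "threshold_move x c = map (\<lambda>i. threshold_bound x c (Suc i) - threshold_bound x c i) [0..<length x]"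

lemma raised_sum_Suc: "raised_sum x c (Suc m) = raised_sum x c m + max (x ! m) c"
  by (simp add: raised_sum_def)

lemma lowered_sum_Suc: "lowered_sum x c (Suc m) = lowered_sum x c m + min (x ! m) (c - 1)"
  by (simp add: lowered_sum_def)

lemma lowered_sum_alt:
  assumes "m \<le> length x"
  shows "lowered_sum x c m = (\<Sum>j<m. x ! j) + (\<Sum>j\<in>{m..<length x}. max (x ! j - (c - 1)) 0)"
proof -
  have "(\<Sum>j<m. min (x ! j) (c - 1)) + (\<Sum>j<m. max (x ! j - (c - 1)) 0) = (\<Sum>j<m. x ! j)"
    by (simp add: sum.distrib[symmetric]) (intro sum.cong, auto)
  then show ?thesis
    using sum_lessThan_split[OF assms, of "\<lambda>j. max (x ! j - (c - 1)) 0"]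
    unfolding lowered_sum_def by linarith
qed

lemma prefix_sum_plus_le_raised_sum:
  assumes "k \<le> m"
  shows "(\<Sum>j<k. x ! j) + real (m - k) * c \<le> raised_sum x c m"
proof -
  have "(\<Sum>j<k. x ! j) + real (m - k) * c = (\<Sum>j<k. x ! j) + (\<Sum>j\<in>{k..<m}. c)"
    by simp
  also have "\<dots> \<le> (\<Sum>j<k. max (x ! j) c) + (\<Sum>j\<in>{k..<m}. max (x ! j) c)"
    by (intro add_mono sum_mono) auto
  also have "\<dots> = raised_sum x c m"
    unfolding raised_sum_def using sum_lessThan_split[OF assms, of "\<lambda>j. max (x ! j) c"] by simp
  finally show ?thesis .
qed

lemma prefix_sum_minus_le_lowered_sum:
  assumes "m \<le> k" "k \<le> length x"
  shows "(\<Sum>j<k. x ! j) - real (k - m) * (c - 1) \<le> lowered_sum x c m"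
proof -
  have "(\<Sum>j<k. x ! j) - real (k - m) * (c - 1) = (\<Sum>j<m. x ! j) + (\<Sum>j\<in>{m..<k}. x ! j - (c - 1))"
    using sum_lessThan_split[OF assms(1)] by (simp add: sum_subtractf)
  also have "\<dots> \<le> (\<Sum>j<m. x ! j) + (\<Sum>j\<in>{m..<length x}. max (x ! j - (c - 1)) 0)"
  proof -
    have "(\<Sum>j\<in>{m..<k}. x ! j - (c - 1)) \<le> (\<Sum>j\<in>{m..<k}. max (x ! j - (c - 1)) 0)"
      by (intro sum_mono) auto
    also have "\<dots> \<le> (\<Sum>j\<in>{m..<length x}. max (x ! j - (c - 1)) 0)"
      using assms(2) by (intro sum_mono2) auto
    finally show ?thesis
      by simp
  qed
  also have "\<dots> = lowered_sum x c m"
    using assms by (simp add: lowered_sum_alt)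
  finally show ?thesis .
qed

lemma raised_sum_attained:
  fixes y :: "real list"
  assumes sorted: "sorted_wrt (\<ge>) y" and m: "m \<le> length y"
  obtains k where "k \<le> m" "raised_sum y c m = (\<Sum>j<k. y ! j) + real (m - k) * c"
proof -
  have closed: "c \<le> y ! i" if "i \<le> j" "j < m" "c \<le> y ! j" for i j
    using sorted_wrt_ge_nth_mono[OF sorted, of i j] that m by linarith
  obtain k where k: "k \<le> m" "\<And>j. j < k \<Longrightarrow> c \<le> y ! j" "\<And>j. k \<le> j \<Longrightarrow> j < m \<Longrightarrow> \<not> c \<le> y ! j"
    using downward_closed_initial_segment[of m "\<lambda>j. c \<le> y ! j"] closed by blast
  have "raised_sum y c m = (\<Sum>j<k. max (y ! j) c) + (\<Sum>j\<in>{k..<m}. max (y ! j) c)"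
    unfolding raised_sum_def using sum_lessThan_split[OF k(1)] .
  also have "\<dots> = (\<Sum>j<k. y ! j) + (\<Sum>j\<in>{k..<m}. c)"
  proof -
    have "max (y ! j) c = c" if "j \<in> {k..<m}" for j
      using k(3)[of j] that by auto
    then show ?thesis
      using k(2) by (intro arg_cong2[where f = "(+)"] sum.cong) auto
  qed
  finally show ?thesis
    using that k(1) by simp
qed

lemma lowered_sum_attained:
  fixes y :: "real list"
  assumes sorted: "sorted_wrt (\<ge>) y" and m: "m \<le> length y"
  obtains k where "m \<le> k" "k \<le> length y" "lowered_sum y c m = (\<Sum>j<k. y ! j) - real (k - m) * (c - 1)"
proof -
  have closed: "c - 1 < y ! i" if "i \<le> j" "j < length y" "c - 1 < y ! j" for i j
    using sorted_wrt_ge_nth_mono[OF sorted, of i j] that by linarith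
  obtain l where l: "l \<le> length y" "\<And>j. j < l \<Longrightarrow> c - 1 < y ! j"
    "\<And>j. l \<le> j \<Longrightarrow> j < length y \<Longrightarrow> \<not> c - 1 < y ! j"
    using downward_closed_initial_segment[of "length y" "\<lambda>j. c - 1 < y ! j"] closed by blast
  define k where "k = max l m"
  have k: "m \<le> k" "k \<le> length y"
    using l(1) m by (auto simp: k_def)
  have "(\<Sum>j\<in>{m..<length y}. max (y ! j - (c - 1)) 0)
      = (\<Sum>j\<in>{m..<k}. max (y ! j - (c - 1)) 0) + (\<Sum>j\<in>{k..<length y}. max (y ! j - (c - 1)) 0)"
    using k by (simp add: sum.atLeastLessThan_concat)
  also have "(\<Sum>j\<in>{k..<length y}. max (y ! j - (c - 1)) 0) = 0"
  proof (intro sum.neutral ballI)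
    fix j assume "j \<in> {k..<length y}"
    then show "max (y ! j - (c - 1)) 0 = 0"
      using l(3)[of j] by (auto simp: k_def)
  qed
  also have "(\<Sum>j\<in>{m..<k}. max (y ! j - (c - 1)) 0) = (\<Sum>j\<in>{m..<k}. y ! j - (c - 1))"
    using l(2) by (intro sum.cong) (auto simp: k_def)
  finally have "lowered_sum y c m = (\<Sum>j<m. y ! j) + (\<Sum>j\<in>{m..<k}. y ! j) - real (k - m) * (c - 1)"
    using m by (simp add: lowered_sum_alt sum_subtractf)
  then show ?thesis
    using that k sum_lessThan_split[OF k(1), of "\<lambda>j. y ! j"] by simp
qed

lemma raised_sum_mono:
  fixes x y :: "real list"
  assumes "sorted_wrt (\<ge>) y" "m \<le> length y"
    and prefix: "\<And>k. k \<le> m \<Longrightarrow> (\<Sum>j<k. y ! j) \<le> (\<Sum>j<k. x ! j)"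
  shows "raised_sum y c m \<le> raised_sum x c m"
proof -
  obtain k where k: "k \<le> m" "raised_sum y c m = (\<Sum>j<k. y ! j) + real (m - k) * c"
    using raised_sum_attained[OF assms(1,2)] .
  then show ?thesis
    using prefix[OF k(1)] prefix_sum_plus_le_raised_sum[OF k(1), of x c] by linarith
qed

lemma lowered_sum_mono:
  fixes x y :: "real list"
  assumes "sorted_wrt (\<ge>) y" "m \<le> length y" "length x = length y"
    and prefix: "\<And>k. k \<le> length y \<Longrightarrow> (\<Sum>j<k. y ! j) \<le> (\<Sum>j<k. x ! j)"
  shows "lowered_sum y c m \<le> lowered_sum x c m"
proof -
  obtain k where k: "m \<le> k" "k \<le> length y" "lowered_sum y c m = (\<Sum>j<k. y ! j) - real (k - m) * (c - 1)"
    using lowered_sum_attained[OF assms(1,2)] .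
  then show ?thesis
    using prefix[OF k(2)] prefix_sum_minus_le_lowered_sum[OF k(1), of x c] assms(3) by linarith
qed

lemma sum_subset_le_raised_sum:
  fixes y y' :: "real list"
  assumes sorted: "sorted_wrt (\<ge>) y" and S: "S \<subseteq> {..<length y}"
    and upper: "\<And>i. i < length y \<Longrightarrow> y' ! i \<le> max (y ! i) c"
  shows "(\<Sum>i\<in>S. y' ! i) \<le> raised_sum y c (card S)"
proof -
  have "(\<Sum>i\<in>S. y' ! i) \<le> (\<Sum>i\<in>S. max (y ! i) c)"
    using upper S by (intro sum_mono) auto
  also have "\<dots> \<le> (\<Sum>i<card S. max (y ! i) c)"
    using sorted_wrt_ge_nth_mono[OF sorted]
    by (intro sum_subset_le_sum_prefix[OF _ S refl]) (simp add: max.coboundedI1)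
  finally show ?thesis
    by (simp add: raised_sum_def)
qed

lemma sum_subset_le_lowered_sum:
  fixes y y' :: "real list"
  assumes sorted: "sorted_wrt (\<ge>) y" and S: "S \<subseteq> {..<length y}"
    and len: "length y' = length y" and sum: "sum_list y' = sum_list y"
    and lower: "\<And>i. i < length y \<Longrightarrow> min (y ! i) (c - 1) \<le> y' ! i"
  shows "(\<Sum>i\<in>S. y' ! i) \<le> lowered_sum y c (card S)"
proof -
  let ?n = "length y" and ?T = "{..<length y} - S"
  have "(\<Sum>i\<in>S. y' ! i) = (\<Sum>i<?n. y ! i) - (\<Sum>i\<in>?T. y' ! i)"
    using sum len S by (simp add: sum_list_sum_nth atLeast0LessThan sum_diff finite_subset)
  also have "\<dots> \<le> (\<Sum>i<?n. y ! i) - (\<Sum>i\<in>?T. min (y ! i) (c - 1))"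
    using lower by (intro diff_left_mono sum_mono) auto
  also have "\<dots> = (\<Sum>i\<in>S. min (y ! i) (c - 1)) + (\<Sum>i<?n. max (y ! i - (c - 1)) 0)"
  proof -
    have "(\<Sum>i<?n. y ! i) = (\<Sum>i<?n. min (y ! i) (c - 1)) + (\<Sum>i<?n. max (y ! i - (c - 1)) 0)"
      by (simp add: sum.distrib[symmetric]) (intro sum.cong, auto)
    moreover have "(\<Sum>i<?n. min (y ! i) (c - 1)) = (\<Sum>i\<in>S. min (y ! i) (c - 1)) + (\<Sum>i\<in>?T. min (y ! i) (c - 1))"
      using S by (simp add: sum_diff finite_subset)
    ultimately show ?thesis
      by simp
  qed
  also have "\<dots> \<le> lowered_sum y c (card S)"
    using sorted_wrt_ge_nth_mono[OF sorted] unfolding lowered_sum_def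
    by (intro add_right_mono sum_subset_le_sum_prefix[OF _ S refl]) (simp add: min.coboundedI1)
  finally show ?thesis .
qed

lemma clamped_sum_subset_le_threshold_bound:
  fixes x y y' :: "real list"
  assumes sorted: "sorted_wrt (\<ge>) y" and len: "length x = length y" "length y' = length y"
    and prefix: "\<And>k. k \<le> length y \<Longrightarrow> (\<Sum>j<k. y ! j) \<le> (\<Sum>j<k. x ! j)"
    and sum: "sum_list y' = sum_list y"
    and clamped: "\<And>i. i < length y \<Longrightarrow> min (y ! i) (c - 1) \<le> y' ! i \<and> y' ! i \<le> max (y ! i) c"
    and S: "S \<subseteq> {..<length y}"
  shows "(\<Sum>i\<in>S. y' ! i) \<le> threshold_bound x c (card S)"
proof -
  have card_S: "card S \<le> length y"
    using card_mono[OF _ S] by simp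
  have "(\<Sum>i\<in>S. y' ! i) \<le> raised_sum x c (card S)"
    using sum_subset_le_raised_sum[OF sorted S] raised_sum_mono[OF sorted card_S] clamped prefix card_S
    by (meson order.trans)
  moreover have "(\<Sum>i\<in>S. y' ! i) \<le> lowered_sum x c (card S)"
    using sum_subset_le_lowered_sum[OF sorted S len(2) sum] lowered_sum_mono[OF sorted card_S len(1) prefix]
      clamped by (meson order.trans)
  ultimately show ?thesis
    by (simp add: threshold_bound_def)
qed

lemma threshold_bound_0: "threshold_bound x c 0 = 0"
  by (simp add: threshold_bound_def raised_sum_def lowered_sum_def sum_nonneg)

lemma threshold_bound_length: "threshold_bound x c (length x) = sum_list x"
proof -
  have "lowered_sum x c (length x) = (\<Sum>j<length x. x ! j)"
    by (simp add: lowered_sum_alt)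
  moreover have "(\<Sum>j<length x. x ! j) \<le> raised_sum x c (length x)"
    using prefix_sum_plus_le_raised_sum[of "length x" "length x" x c] by simp
  ultimately show ?thesis
    by (simp add: threshold_bound_def sum_list_sum_nth atLeast0LessThan)
qed

lemma length_threshold_move [simp]: "length (threshold_move x c) = length x"
  by (simp add: threshold_move_def)

lemma sum_prefix_threshold_move:
  assumes "m \<le> length x"
  shows "(\<Sum>i<m. threshold_move x c ! i) = threshold_bound x c m"
proof -
  have "(\<Sum>i<m. threshold_move x c ! i) = (\<Sum>i<m. threshold_bound x c (Suc i) - threshold_bound x c i)"
    using assms by (intro sum.cong) (auto simp: threshold_move_def)
  also have "\<dots> = threshold_bound x c m"
    by (simp add: sum_lessThan_telescope threshold_bound_0)
  finally show ?thesis .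
qed

lemma sum_list_threshold_move: "sum_list (threshold_move x c) = sum_list x"
  using sum_prefix_threshold_move[of "length x" x c]
  by (simp add: sum_list_sum_nth atLeast0LessThan threshold_bound_length)

lemma threshold_move_nth:
  fixes x :: "real list" and c :: real
  assumes sorted: "sorted_wrt (\<ge>) x" and i: "i < length x"
  defines "v \<equiv> threshold_move x c ! i"
  shows "v = x ! i \<or> (c - 1 \<le> x ! i \<and> x ! i \<le> c \<and> c - 1 \<le> v \<and> v \<le> c)"
proof -
  have v: "v = threshold_bound x c (Suc i) - threshold_bound x c i"
    using i by (simp add: v_def threshold_move_def)
  have below: "threshold_bound x c m = (\<Sum>j<m. x ! j)"
    if "x ! i < c - 1" "i \<le> m" "m \<le> length x" for m
  proof -
    have "\<forall>j\<in>{m..<length x}. x ! j \<le> c - 1"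
    proof
      fix j assume "j \<in> {m..<length x}"
      then show "x ! j \<le> c - 1"
        using sorted_wrt_ge_nth_mono[OF sorted, of i j] that by simp
    qed
    then have "lowered_sum x c m = (\<Sum>j<m. x ! j)"
      using that(3) by (simp add: lowered_sum_alt)
    then show ?thesis
      using prefix_sum_plus_le_raised_sum[of m m x c] by (simp add: threshold_bound_def)
  qed
  have above: "threshold_bound x c m = (\<Sum>j<m. x ! j)"
    if "c < x ! i" "m \<le> Suc i" for m
  proof -
    have "\<forall>j<m. c \<le> x ! j"
    proof (intro allI impI)
      fix j assume "j < m"
      then show "c \<le> x ! j"
        using sorted_wrt_ge_nth_mono[OF sorted, of j i] that i by simp
    qed
    then have "raised_sum x c m = (\<Sum>j<m. x ! j)"
      by (simp add: raised_sum_def)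
    then show ?thesis
      using prefix_sum_minus_le_lowered_sum[of m m x c] that(2) i by (simp add: threshold_bound_def)
  qed
  consider "x ! i < c - 1" | "c < x ! i" | "c - 1 \<le> x ! i" "x ! i \<le> c"
    by linarith
  then show ?thesis
  proof cases
    case 1
    then show ?thesis
      using below[of i] below[of "Suc i"] i v by simp
  next
    case 2
    then show ?thesis
      using above[of i] above[of "Suc i"] v by simp
  next
    case 3
    \<comment> \<open>At \<open>i\<close> the raised sum grows by \<open>c\<close> and the lowered sum by \<open>c - 1\<close>.\<close>
    then have "c - 1 \<le> v \<and> v \<le> c"
      unfolding v threshold_bound_def raised_sum_Suc lowered_sum_Suc
      by (simp add: min_def max_def)
    then show ?thesis
      using 3 by blast
  qed
qed

lemma cup_step_threshold_move:
  fixes x :: "real list"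
  assumes "sorted_wrt (\<ge>) x" "0 < length x"
  shows "cup_step x (threshold_move x c)"
  using assms threshold_move_nth[OF assms(1)]
  by (intro cup_step_of_threshold[where c = c]) (simp_all add: sum_list_threshold_move)

theorem lemma6p15:
  fixes x y y' :: "real list"
  assumes "length x = length y"
    and "sorted_wrt (\<ge>) x" and "sorted_wrt (\<ge>) y"
    and "majorizes x y"
    and "cup_step y y'"
  shows "\<exists>x'. cup_step x x' \<and> majorizes x' y'"
proof -
  obtain c where clamped: "\<And>i. i < length y \<Longrightarrow> min (y ! i) (c - 1) \<le> y' ! i \<and> y' ! i \<le> max (y ! i) c"
    using cup_step_clamped[OF assms(5)] by blast
  have y': "length y' = length y" "0 < length y" "sum_list y' = sum_list y"
    using cup_step_length_sum[OF assms(5)] by auto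
  have prefix: "\<And>k. k \<le> length y \<Longrightarrow> (\<Sum>j<k. y ! j) \<le> (\<Sum>j<k. x ! j)"
    using majorizes_sorted_prefix_sums[OF assms(2-4)] .
  have "majorizes (threshold_move x c) y'"
  proof (rule majorizesI)
    show "length (threshold_move x c) = length y'" "sum_list (threshold_move x c) = sum_list y'"
      using assms(1,4) y' by (simp_all add: sum_list_threshold_move majorizes_def)
  next
    fix S assume "S \<subseteq> {..<length y'}"
    then show "(\<Sum>i\<in>S. y' ! i) \<le> (\<Sum>i<card S. threshold_move x c ! i)"
      using clamped_sum_subset_le_threshold_bound[OF assms(3,1) y'(1) prefix y'(3) clamped]
        sum_prefix_threshold_move card_mono[of "{..<length y'}" S] assms(1) y'(1) by simp
  qed
  then show ?thesis
    using cup_step_threshold_move[OF assms(2)] assms(1) y'(2) by auto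
qed

end
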